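(* Let $G\cong G_1\odot G_2$ be a corona graph where $G_1$ has no isolated vertices, and let $w=(w_0,\dots,w_l)$ with $w_0$ a positive integer and $w_1,\dots,w_l$ nonnegative integers. If $l\ge w_0\ge w_1\ge\cdots\ge w_l$ and $|V(G_2)|\ge w_0$, then $\gamma_w(G)=w_0\gamma(G)$.
   Context: All graphs are finite and simple; $N(v)$ denotes the open neighbourhood of $v$. For a vector $w=(w_0,\dots,w_l)$ of nonnegative integers with $w_0\ge1$, a function $f:V(G)\to\{0,\dots,l\}$ is a $w$-dominating function if $\sum_{u\in N(v)}f(u)\ge w_i$ for every vertex $v$ with $f(v)=i$. The weight is $\omega(f)=\sum_v f(v)$, and $\gamma_w(G)$ is the minimum weight of a $w$-dominating function on $G$. $\gamma(G)$ is the domination number. The corona product $G_1\odot G_2$ is obtained from one copy of $G_1$ and $|V(G_1)|$ copies of $G_2$ by joining every vertex of the $i$-th copy of $G_2$ to the $i$-th vertex of $G_1$. *)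

theory Defs
  imports Main
begin

definition simple_graph :: "'a set \<Rightarrow> ('a \<Rightarrow> 'a \<Rightarrow> bool) \<Rightarrow> bool" where
  "simple_graph V E \<longleftrightarrow> finite V \<and> (\<forall>u v. E u v \<longrightarrow> u \<in> V \<and> v \<in> V)
     \<and> (\<forall>u v. E u v \<longrightarrow> E v u) \<and> (\<forall>v. \<not> E v v)"

definition nbhd :: "'a set \<Rightarrow> ('a \<Rightarrow> 'a \<Rightarrow> bool) \<Rightarrow> 'a \<Rightarrow> 'a set" where
  "nbhd V E v = {u \<in> V. E v u}"

definition no_isolated :: "'a set \<Rightarrow> ('a \<Rightarrow> 'a \<Rightarrow> bool) \<Rightarrow> bool" where
  "no_isolated V E \<longleftrightarrow> (\<forall>v\<in>V. \<exists>u\<in>V. E v u)"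

definition dominating_set :: "'a set \<Rightarrow> ('a \<Rightarrow> 'a \<Rightarrow> bool) \<Rightarrow> 'a set \<Rightarrow> bool" where
  "dominating_set V E D \<longleftrightarrow> D \<subseteq> V \<and> (\<forall>v\<in>V - D. \<exists>u\<in>D. E v u)"

definition domination_number :: "'a set \<Rightarrow> ('a \<Rightarrow> 'a \<Rightarrow> bool) \<Rightarrow> nat" where
  "domination_number V E = Min {card D | D. dominating_set V E D}"

text \<open>The vector w = (w_0,...,w_l) is a list of length l+1; entry i is w ! i.\<close>
definition w_dominating :: "'a set \<Rightarrow> ('a \<Rightarrow> 'a \<Rightarrow> bool) \<Rightarrow> nat list \<Rightarrow> ('a \<Rightarrow> nat) \<Rightarrow> bool" where
  "w_dominating V E w f \<longleftrightarrow>
     (\<forall>v\<in>V. f v \<le> length w - 1) \<and>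
     (\<forall>v\<in>V. sum f (nbhd V E v) \<ge> w ! (f v))"

definition w_domination_number :: "'a set \<Rightarrow> ('a \<Rightarrow> 'a \<Rightarrow> bool) \<Rightarrow> nat list \<Rightarrow> nat" where
  "w_domination_number V E w = Min {sum f V | f. w_dominating V E w f}"

text \<open>Corona product G1 \<odot> G2: vertex Inl v is the v-th vertex of G1,
vertex Inr (v,u) is vertex u in the copy of G2 attached to v.\<close>
definition corona_V :: "'a set \<Rightarrow> 'b set \<Rightarrow> ('a + ('a \<times> 'b)) set" where
  "corona_V V1 V2 = Inl ` V1 \<union> Inr ` (V1 \<times> V2)"

fun corona_E :: "('a \<Rightarrow> 'a \<Rightarrow> bool) \<Rightarrow> 'b set \<Rightarrow> ('b \<Rightarrow> 'b \<Rightarrow> bool)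
    \<Rightarrow> ('a + ('a \<times> 'b)) \<Rightarrow> ('a + ('a \<times> 'b)) \<Rightarrow> bool" where
  "corona_E E1 V2 E2 (Inl x) (Inl y) = E1 x y"
| "corona_E E1 V2 E2 (Inr (x, a)) (Inr (y, b)) = (x = y \<and> E2 a b)"
| "corona_E E1 V2 E2 (Inl x) (Inr (y, b)) = (x = y \<and> b \<in> V2)"
| "corona_E E1 V2 E2 (Inr (y, b)) (Inl x) = (x = y \<and> b \<in> V2)"

end

theory Submission
  imports Defs
begin

text \<open>Call the vertex Inl v of G1 together with its copy of G2 the fibre of v. The neighbourhood
of a vertex in a copy of G2 lies inside its fibre, so every dominating set meets every fibre,
and every w-dominating function puts weight at least w_0 on every fibre: either some vertex of
the copy is labelled 0 and then its neighbours carry at least w_0, or all |V(G2)| \<ge> w_0 of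
them carry at least 1. Hence \<gamma>(G) \<ge> |V(G1)| and \<gamma>_w(G) \<ge> w_0 |V(G1)|. Both bounds are
attained by labelling exactly the vertices of G1, with 1 resp. w_0: a vertex of G1 sees a
neighbour in G1 because G1 has no isolated vertices, and its own requirement w_{w_0} is at
most w_0 because w is nonincreasing.\<close>

lemma finite_dominating_set_cards:
  assumes "finite V"
  shows "finite {card D | D. dominating_set V E D}"
proof (rule finite_subset)
  show "{card D | D. dominating_set V E D} \<subseteq> {..card V}"
    using assms by (auto simp: dominating_set_def card_mono)
qed simp

lemma domination_number_eqI:
  assumes "finite V" and "dominating_set V E D"
    and "\<And>D'. dominating_set V E D' \<Longrightarrow> card D \<le> card D'"
  shows "domination_number V E = card D"
  unfolding domination_number_def
  using assms by (intro Min_eqI finite_dominating_set_cards) auto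

lemma finite_w_dominating_weights:
  assumes "finite V"
  shows "finite {sum f V | f. w_dominating V E w f}"
proof (rule finite_subset)
  show "{sum f V | f. w_dominating V E w f} \<subseteq> {..(length w - 1) * card V}"
  proof clarify
    fix f assume "w_dominating V E w f"
    then have "sum f V \<le> (\<Sum>x\<in>V. length w - 1)"
      by (intro sum_mono) (auto simp: w_dominating_def)
    then show "sum f V \<le> (length w - 1) * card V" by (simp add: mult.commute)
  qed
qed simp

lemma w_domination_number_eqI:
  assumes "finite V" and "w_dominating V E w f"
    and "\<And>g. w_dominating V E w g \<Longrightarrow> sum f V \<le> sum g V"
  shows "w_domination_number V E w = sum f V"
  unfolding w_domination_number_def
  using assms by (intro Min_eqI finite_w_dominating_weights) auto

definition corona_fiber :: "'b set \<Rightarrow> 'a \<Rightarrow> ('a + ('a \<times> 'b)) set" where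
  "corona_fiber V2 v = insert (Inl v) (Inr ` ({v} \<times> V2))"

lemma finite_corona_V:
  assumes "finite V1" and "finite V2"
  shows "finite (corona_V V1 V2)"
  using assms by (simp add: corona_V_def)

lemma corona_V_eq_UN_fiber: "corona_V V1 V2 = (\<Union>v\<in>V1. corona_fiber V2 v)"
  by (auto simp: corona_V_def corona_fiber_def)

lemma sum_corona_fiber:
  assumes "finite V2"
  shows "sum f (corona_fiber V2 v) = f (Inl v) + (\<Sum>b\<in>V2. f (Inr (v, b)))"
proof -
  have "sum f (corona_fiber V2 v) = f (Inl v) + sum f (Inr ` ({v} \<times> V2))"
    unfolding corona_fiber_def using assms by (subst sum.insert) auto
  also have "{v} \<times> V2 = Pair v ` V2" by auto
  finally show ?thesis by (simp add: sum.reindex inj_on_def)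
qed

lemma sum_corona_V_eq_sum_fibers:
  assumes "finite V1" and "finite V2"
  shows "sum f (corona_V V1 V2) = (\<Sum>v\<in>V1. sum f (corona_fiber V2 v))"
  unfolding corona_V_eq_UN_fiber using assms
  by (intro sum.UNION_disjoint) (auto simp: corona_fiber_def)

lemma sum_corona_V_ge_if_fibers_ge:
  assumes "finite V1" and "finite V2"
    and "\<And>v. v \<in> V1 \<Longrightarrow> k \<le> sum f (corona_fiber V2 v)"
  shows "k * card V1 \<le> sum f (corona_V V1 V2)"
proof -
  have "k * card V1 = (\<Sum>v\<in>V1. k)" by simp
  also have "\<dots> \<le> (\<Sum>v\<in>V1. sum f (corona_fiber V2 v))"
    using assms(3) by (rule sum_mono)
  also have "\<dots> = sum f (corona_V V1 V2)"
    using assms(1,2) by (rule sum_corona_V_eq_sum_fibers[symmetric])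
  finally show ?thesis .
qed

lemma nbhd_corona_Inr_subset_fiber:
  "nbhd (corona_V V1 V2) (corona_E E1 V2 E2) (Inr (v, b)) \<subseteq> corona_fiber V2 v"
proof
  fix x assume "x \<in> nbhd (corona_V V1 V2) (corona_E E1 V2 E2) (Inr (v, b))"
  then show "x \<in> corona_fiber V2 v"
    by (cases x) (auto simp: nbhd_def corona_V_def corona_fiber_def)
qed

lemma Inl_in_nbhd_corona_Inr:
  assumes "v \<in> V1" and "b \<in> V2"
  shows "Inl v \<in> nbhd (corona_V V1 V2) (corona_E E1 V2 E2) (Inr (v, b))"
  using assms by (simp add: nbhd_def corona_V_def)

lemma Inl_in_nbhd_corona_Inl:
  assumes "u \<in> V1" and "E1 v u"
  shows "Inl u \<in> nbhd (corona_V V1 V2) (corona_E E1 V2 E2) (Inl v)"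
  using assms by (simp add: nbhd_def corona_V_def)

lemma dominating_set_meets_corona_fiber:
  assumes "dominating_set (corona_V V1 V2) (corona_E E1 V2 E2) D"
    and "v \<in> V1" and "b \<in> V2"
  shows "D \<inter> corona_fiber V2 v \<noteq> {}"
proof (cases "Inr (v, b) \<in> D")
  case True
  then show ?thesis using assms(3) by (auto simp: corona_fiber_def)
next
  case False
  have "Inr (v, b) \<in> corona_V V1 V2" using assms(2,3) by (simp add: corona_V_def)
  with False assms(1) obtain u where "u \<in> D" and "corona_E E1 V2 E2 (Inr (v, b)) u"
    by (auto simp: dominating_set_def)
  moreover have "D \<subseteq> corona_V V1 V2" using assms(1) by (simp add: dominating_set_def)
  ultimately have "u \<in> D \<inter> nbhd (corona_V V1 V2) (corona_E E1 V2 E2) (Inr (v, b))"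
    by (auto simp: nbhd_def)
  then show ?thesis using nbhd_corona_Inr_subset_fiber[of V1 V2 E1 E2 v b] by blast
qed

lemma card_dominating_set_corona_ge:
  assumes "finite V1" and "finite V2" and "V2 \<noteq> {}"
    and D: "dominating_set (corona_V V1 V2) (corona_E E1 V2 E2) D"
  shows "card V1 \<le> card D"
proof -
  let ?V = "corona_V V1 V2" and ?\<chi> = "\<lambda>x. if x \<in> D then 1 else 0 :: nat"
  have "D \<subseteq> ?V" using D by (simp add: dominating_set_def)
  then have "card D = sum ?\<chi> ?V"
    using finite_corona_V[OF assms(1,2)] by (simp add: sum.If_cases Int_absorb1)
  moreover have "1 * card V1 \<le> sum ?\<chi> ?V"
  proof (rule sum_corona_V_ge_if_fibers_ge[OF assms(1,2)])
    fix v assume "v \<in> V1"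
    then have "corona_fiber V2 v \<inter> D \<noteq> {}"
      using dominating_set_meets_corona_fiber[OF D] assms(3) by blast
    moreover have "finite (corona_fiber V2 v)"
      using assms(2) by (simp add: corona_fiber_def)
    ultimately show "1 \<le> sum ?\<chi> (corona_fiber V2 v)"
      by (simp add: sum.If_cases Suc_le_eq card_gt_0_iff)
  qed
  ultimately show ?thesis by simp
qed

lemma domination_number_corona:
  fixes V1 :: "'a set" and V2 :: "'b set"
  assumes "finite V1" and "finite V2" and "V2 \<noteq> {}"
  shows "domination_number (corona_V V1 V2) (corona_E E1 V2 E2) = card V1"
proof -
  let ?G1 = "Inl ` V1 :: ('a + 'a \<times> 'b) set"
  have "card ?G1 = card V1" by (simp add: card_image)
  moreover have "domination_number (corona_V V1 V2) (corona_E E1 V2 E2) = card ?G1"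
  proof (rule domination_number_eqI)
    show "dominating_set (corona_V V1 V2) (corona_E E1 V2 E2) ?G1"
      by (auto simp: dominating_set_def corona_V_def)
    show "card ?G1 \<le> card D" if "dominating_set (corona_V V1 V2) (corona_E E1 V2 E2) D" for D
      using card_dominating_set_corona_ge[OF assms that] \<open>card ?G1 = card V1\<close> by simp
  qed (simp add: assms finite_corona_V)
  ultimately show ?thesis by simp
qed

lemma w_dominating_corona_fiber_ge:
  assumes f: "w_dominating (corona_V V1 V2) (corona_E E1 V2 E2) w f"
    and "finite V2" and "w ! 0 \<le> card V2" and v: "v \<in> V1"
  shows "w ! 0 \<le> sum f (corona_fiber V2 v)"
proof (cases "\<exists>b\<in>V2. f (Inr (v, b)) = 0")
  case True
  then obtain b where b: "b \<in> V2" "f (Inr (v, b)) = 0" by auto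
  have "Inr (v, b) \<in> corona_V V1 V2" using v b by (simp add: corona_V_def)
  then have "w ! 0 \<le> sum f (nbhd (corona_V V1 V2) (corona_E E1 V2 E2) (Inr (v, b)))"
    using f b by (auto simp: w_dominating_def)
  also have "\<dots> \<le> sum f (corona_fiber V2 v)"
    using assms(2)
    by (intro sum_mono2 nbhd_corona_Inr_subset_fiber) (simp_all add: corona_fiber_def)
  finally show ?thesis .
next
  case False
  then have "(\<Sum>b\<in>V2. 1) \<le> (\<Sum>b\<in>V2. f (Inr (v, b)))"
    by (intro sum_mono) (simp add: Suc_le_eq)
  then show ?thesis using assms(3) sum_corona_fiber[OF assms(2), of f v] by simp
qed

definition corona_hub_labelling :: "nat \<Rightarrow> 'a + ('a \<times> 'b) \<Rightarrow> nat" where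
  "corona_hub_labelling k x = (case x of Inl _ \<Rightarrow> k | Inr _ \<Rightarrow> 0)"

lemma w_dominating_corona_hub_labelling:
  fixes V1 :: "'a set" and V2 :: "'b set"
  assumes "finite V1" and "finite V2" and "no_isolated V1 E1"
    and "w ! 0 < length w" and "\<forall>i < length w. w ! i \<le> w ! 0"
  shows "w_dominating (corona_V V1 V2) (corona_E E1 V2 E2) w (corona_hub_labelling (w ! 0))"
  unfolding w_dominating_def
proof (intro conjI ballI)
  let ?V = "corona_V V1 V2" and ?E = "corona_E E1 V2 E2"
    and ?f = "corona_hub_labelling (w ! 0) :: 'a + 'a \<times> 'b \<Rightarrow> nat"
  have hub_le: "?f (Inl u) \<le> sum ?f (nbhd ?V ?E x)" if "Inl u \<in> nbhd ?V ?E x" for u x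
    using that finite_corona_V[OF assms(1,2)] by (intro member_le_sum) (auto simp: nbhd_def)
  fix x assume x: "x \<in> ?V"
  show "?f x \<le> length w - 1"
    using assms(4) by (auto simp: corona_hub_labelling_def split: sum.split)
  show "w ! ?f x \<le> sum ?f (nbhd ?V ?E x)"
  proof (cases x)
    case (Inl v)
    then obtain u where "u \<in> V1" "E1 v u"
      using x assms(3) by (auto simp: no_isolated_def corona_V_def)
    then have "Inl u \<in> nbhd ?V ?E x" unfolding Inl by (rule Inl_in_nbhd_corona_Inl)
    then have "w ! 0 \<le> sum ?f (nbhd ?V ?E x)"
      using hub_le by (fastforce simp: corona_hub_labelling_def)
    moreover have "w ! ?f x \<le> w ! 0"
      using assms(4,5) Inl by (simp add: corona_hub_labelling_def)
    ultimately show ?thesis by linarith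
  next
    case (Inr p)
    then obtain v b where x_eq: "x = Inr (v, b)" and "v \<in> V1" "b \<in> V2"
      using x by (auto simp: corona_V_def)
    from \<open>v \<in> V1\<close> \<open>b \<in> V2\<close> have "Inl v \<in> nbhd ?V ?E x"
      unfolding x_eq by (rule Inl_in_nbhd_corona_Inr)
    then show ?thesis
      using hub_le x_eq by (fastforce simp: corona_hub_labelling_def)
  qed
qed

lemma w_domination_number_corona:
  fixes V1 :: "'a set" and V2 :: "'b set"
  assumes "finite V1" and "finite V2" and "no_isolated V1 E1"
    and "w ! 0 < length w" and "\<forall>i < length w. w ! i \<le> w ! 0" and "w ! 0 \<le> card V2"
  shows "w_domination_number (corona_V V1 V2) (corona_E E1 V2 E2) w = w ! 0 * card V1"
proof -
  have hub_weight: "sum (corona_hub_labelling (w ! 0)) (corona_V V1 V2) = w ! 0 * card V1"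
    using assms(1,2)
    by (simp add: sum_corona_V_eq_sum_fibers sum_corona_fiber corona_hub_labelling_def)
  have "w_domination_number (corona_V V1 V2) (corona_E E1 V2 E2) w
      = sum (corona_hub_labelling (w ! 0)) (corona_V V1 V2)"
  proof (rule w_domination_number_eqI)
    show "finite (corona_V V1 V2)" using assms(1,2) by (rule finite_corona_V)
    show "w_dominating (corona_V V1 V2) (corona_E E1 V2 E2) w (corona_hub_labelling (w ! 0))"
      using assms(1-5) by (rule w_dominating_corona_hub_labelling)
  next
    fix g assume "w_dominating (corona_V V1 V2) (corona_E E1 V2 E2) w g"
    then show "sum (corona_hub_labelling (w ! 0)) (corona_V V1 V2) \<le> sum g (corona_V V1 V2)"
      unfolding hub_weight using assms(1,2,6)
      by (intro sum_corona_V_ge_if_fibers_ge w_dominating_corona_fiber_ge)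
  qed
  then show ?thesis using hub_weight by simp
qed

theorem theorem7:
  fixes V1 :: "'a set" and E1 :: "'a \<Rightarrow> 'a \<Rightarrow> bool"
    and V2 :: "'b set" and E2 :: "'b \<Rightarrow> 'b \<Rightarrow> bool"
    and w :: "nat list" and l :: nat
  assumes "simple_graph V1 E1" and "simple_graph V2 E2"
    and "no_isolated V1 E1"
    and "length w = l + 1"
    and "w ! 0 \<ge> 1"
    and "l \<ge> w ! 0"
    and "\<forall>i j. i \<le> j \<and> j \<le> l \<longrightarrow> w ! j \<le> w ! i"
    and "card V2 \<ge> w ! 0"
  shows "w_domination_number (corona_V V1 V2) (corona_E E1 V2 E2) w
         = w ! 0 * domination_number (corona_V V1 V2) (corona_E E1 V2 E2)"
proof -
  have "finite V1" and "finite V2" using assms(1,2) by (auto simp: simple_graph_def)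
  moreover have "V2 \<noteq> {}" using assms(5,8) by auto
  moreover have "w ! 0 < length w" and "\<forall>i < length w. w ! i \<le> w ! 0"
    using assms(4,6,7) by auto
  ultimately show ?thesis
    using assms(3,8) domination_number_corona w_domination_number_corona by metis
qed

end
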